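(* Let $(X,d)$ be an ultra-metric space and let $\pi:G\times X\to X$ be a continuous action of a topological group $G$ which is $\pi$-uniform with respect to the uniformity of $d$. Suppose some orbit $Gx_0$ ($x_0\in X$) is $d$-bounded. Then there exist an ultra-normed Boolean group $(E,\|\cdot\|)$ on which $G$ acts continuously by group automorphisms (with respect to the topology of $\|\cdot\|$) and a $G$-equivariant isometric embedding $\alpha:X\hookrightarrow E$ (i.e. $\|\alpha(x)-\alpha(y)\|=d(x,y)$) such that $\alpha(X)$ is closed in $E$.
   Context: An ultra-metric is a metric with $d(x,z)\le\max\{d(x,y),d(y,z)\}$. An ultra-norm on an abelian group $E$ is a function $\|\cdot\|:E\to[0,\infty)$ with $\|u\|=0\iff u=0$, $\|u\|=\|-u\|$, and $\|u+v\|\le\max\{\|u\|,\|v\|\}$; $E$ is topologized by the metric $\|u-v\|$. A Boolean group is an abelian group with $x+x=0$ for all $x$. An action on a uniform space is $\pi$-uniform if for every entourage $\varepsilon$ and $g_0\in G$ there exist an entourage $\delta$ and a neighborhood $O$ of $g_0$ such that $(gx,gy)\in\varepsilon$ whenever $(x,y)\in\delta$ and $g\in O$. *)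

theory Defs
  imports "HOL-Analysis.Analysis" "HOL-Algebra.Group"
begin

definition ultrametric :: "'a set \<Rightarrow> ('a \<Rightarrow> 'a \<Rightarrow> real) \<Rightarrow> bool" where
  "ultrametric M d \<longleftrightarrow> Metric_space M d \<and>
     (\<forall>x\<in>M. \<forall>y\<in>M. \<forall>z\<in>M. d x z \<le> max (d x y) (d y z))"

definition topological_group :: "('g, 'b) monoid_scheme \<Rightarrow> 'g topology \<Rightarrow> bool" where
  "topological_group G T \<longleftrightarrow> group G \<and> topspace T = carrier G \<and>
     continuous_map (prod_topology T T) T (\<lambda>(a, b). a \<otimes>\<^bsub>G\<^esub> b) \<and>
     continuous_map T T (\<lambda>a. inv\<^bsub>G\<^esub> a)"

definition is_action :: "('g, 'b) monoid_scheme \<Rightarrow> 'x set \<Rightarrow> ('g \<Rightarrow> 'x \<Rightarrow> 'x) \<Rightarrow> bool" where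
  "is_action G X \<pi> \<longleftrightarrow>
     (\<forall>g\<in>carrier G. \<forall>x\<in>X. \<pi> g x \<in> X) \<and>
     (\<forall>x\<in>X. \<pi> \<one>\<^bsub>G\<^esub> x = x) \<and>
     (\<forall>g\<in>carrier G. \<forall>h\<in>carrier G. \<forall>x\<in>X. \<pi> (g \<otimes>\<^bsub>G\<^esub> h) x = \<pi> g (\<pi> h x))"

text \<open>\<pi>-uniformity of an action w.r.t. the uniformity of the metric d
  (the metric uniformity has the basic entourages {(x,y). d x y < e}, e > 0;
   a neighbourhood of g0 is a set containing an open set containing g0).\<close>
definition pi_uniform :: "('g, 'b) monoid_scheme \<Rightarrow> 'g topology \<Rightarrow> 'x set \<Rightarrow>
     ('x \<Rightarrow> 'x \<Rightarrow> real) \<Rightarrow> ('g \<Rightarrow> 'x \<Rightarrow> 'x) \<Rightarrow> bool" where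
  "pi_uniform G T X d \<pi> \<longleftrightarrow>
     (\<forall>\<epsilon>>0. \<forall>g0\<in>carrier G. \<exists>\<delta>>0. \<exists>U. openin T U \<and> g0 \<in> U \<and>
        (\<forall>g\<in>U. \<forall>x\<in>X. \<forall>y\<in>X. d x y < \<delta> \<longrightarrow> d (\<pi> g x) (\<pi> g y) < \<epsilon>))"

text \<open>Ultra-norm on an abelian group E (written multiplicatively in HOL-Algebra).\<close>
definition ultranorm :: "('e, 'c) monoid_scheme \<Rightarrow> ('e \<Rightarrow> real) \<Rightarrow> bool" where
  "ultranorm E nrm \<longleftrightarrow>
     (\<forall>u\<in>carrier E. 0 \<le> nrm u) \<and>
     (\<forall>u\<in>carrier E. nrm u = 0 \<longleftrightarrow> u = \<one>\<^bsub>E\<^esub>) \<and>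
     (\<forall>u\<in>carrier E. nrm (inv\<^bsub>E\<^esub> u) = nrm u) \<and>
     (\<forall>u\<in>carrier E. \<forall>v\<in>carrier E. nrm (u \<otimes>\<^bsub>E\<^esub> v) \<le> max (nrm u) (nrm v))"

definition boolean_group :: "('e, 'c) monoid_scheme \<Rightarrow> bool" where
  "boolean_group E \<longleftrightarrow> comm_group E \<and> (\<forall>x\<in>carrier E. x \<otimes>\<^bsub>E\<^esub> x = \<one>\<^bsub>E\<^esub>)"

definition norm_dist :: "('e, 'c) monoid_scheme \<Rightarrow> ('e \<Rightarrow> real) \<Rightarrow> 'e \<Rightarrow> 'e \<Rightarrow> real" where
  "norm_dist E nrm u v = nrm (u \<otimes>\<^bsub>E\<^esub> inv\<^bsub>E\<^esub> v)"

end

theory Submission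
  imports Defs
begin

text \<open>
  The group E is the Boolean group of
  finite subsets of X under symmetric difference (written +), and X embeds into E by x \<mapsto> {x}.
  A finite set A is normed by the supremum of all radii r for which some ball of radius r
  about a centre c, with r \<le> max 1 (d c x0), contains an odd number of points of A.

  Finally the action of G
  on X is pushed forward to E by taking images; it acts by automorphisms, and the action is
  jointly continuous by continuity of the orbit maps together with \<pi>-uniformity.
\<close>

lemma card_sym_diff:
  assumes "finite A" "finite B"
  shows "card (sym_diff A B) + 2 * card (A \<inter> B) = card A + card B"
proof -
  have "sym_diff A B = (A \<union> B) - (A \<inter> B)" by blast
  then have "card (sym_diff A B) = card (A \<union> B) - card (A \<inter> B)"
    using assms by (simp add: card_Diff_subset Int_lower1 le_supI1)
  moreover have "card (A \<inter> B) \<le> card (A \<union> B)"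
    using assms by (intro card_mono) auto
  ultimately show ?thesis
    using card_Un_Int[OF assms] by linarith
qed

lemma odd_card_sym_diff_Int:
  assumes "finite A" "finite B" "odd (card (sym_diff A B \<inter> K))"
  shows "odd (card (A \<inter> K)) \<or> odd (card (B \<inter> K))"
proof -
  have "sym_diff A B \<inter> K = sym_diff (A \<inter> K) (B \<inter> K)" by blast
  then have "card (sym_diff A B \<inter> K) + 2 * card (A \<inter> K \<inter> (B \<inter> K)) = card (A \<inter> K) + card (B \<inter> K)"
    using card_sym_diff[of "A \<inter> K" "B \<inter> K"] assms(1,2) by simp
  with assms(3) show ?thesis by presburger
qed

lemma sym_diff_insert:
  "p \<notin> P \<Longrightarrow> q \<notin> Q \<Longrightarrow> sym_diff (insert p P) (insert q Q) = sym_diff (sym_diff {p} {q}) (sym_diff P Q)"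
  by (cases "p = q") (auto simp: insert_Diff_if)

lemma sym_diff_trans: "sym_diff A C = sym_diff (sym_diff A B) (sym_diff B C)"
  by blast

lemma image_sym_diff:
  assumes "inj_on f X" "A \<subseteq> X" "B \<subseteq> X"
  shows "f ` sym_diff A B = sym_diff (f ` A) (f ` B)"
proof -
  have "f ` (A - B) = f ` A - f ` B" "f ` (B - A) = f ` B - f ` A"
    by (rule inj_on_image_set_diff[OF assms(1)]; use assms in auto)+
  then show ?thesis by (simp add: image_Un)
qed

text \<open>The operation is made total by sending non-members of the carrier to the empty set, so that
  the inverse and hence the distance induced by a norm are well behaved everywhere.\<close>

definition fin_part :: "'x set \<Rightarrow> 'x set \<Rightarrow> 'x set" where
  "fin_part X A = (if finite A \<and> A \<subseteq> X then A else {})"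

definition finite_subsets_group :: "'x set \<Rightarrow> 'x set monoid" where
  "finite_subsets_group X =
     \<lparr>carrier = {A. finite A \<and> A \<subseteq> X},
      mult = (\<lambda>A B. sym_diff (fin_part X A) (fin_part X B)),
      one = {}\<rparr>"

lemma in_carrier_finite_subsets_group [simp]:
  "A \<in> carrier (finite_subsets_group X) \<longleftrightarrow> finite A \<and> A \<subseteq> X"
  by (simp add: finite_subsets_group_def)

lemma one_finite_subsets_group [simp]: "\<one>\<^bsub>finite_subsets_group X\<^esub> = {}"
  by (simp add: finite_subsets_group_def)

lemma mult_finite_subsets_group:
  "A \<otimes>\<^bsub>finite_subsets_group X\<^esub> B = sym_diff (fin_part X A) (fin_part X B)"
  by (simp add: finite_subsets_group_def)

lemma fin_part_carrier [simp]: "A \<in> carrier (finite_subsets_group X) \<Longrightarrow> fin_part X A = A"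
  by (simp add: fin_part_def)

lemma fin_part_idem [simp]: "fin_part X (fin_part X A) = fin_part X A"
  by (simp add: fin_part_def)

lemma mult_finite_subsets_group_carrier [simp]:
  "A \<in> carrier (finite_subsets_group X) \<Longrightarrow> B \<in> carrier (finite_subsets_group X) \<Longrightarrow>
     A \<otimes>\<^bsub>finite_subsets_group X\<^esub> B = sym_diff A B"
  by (simp add: mult_finite_subsets_group)

lemma comm_group_finite_subsets_group: "comm_group (finite_subsets_group X)"
proof (rule comm_groupI)
  fix A B C assume "A \<in> carrier (finite_subsets_group X)" "B \<in> carrier (finite_subsets_group X)"
    "C \<in> carrier (finite_subsets_group X)"
  then show "A \<otimes>\<^bsub>finite_subsets_group X\<^esub> B \<otimes>\<^bsub>finite_subsets_group X\<^esub> C =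
      A \<otimes>\<^bsub>finite_subsets_group X\<^esub> (B \<otimes>\<^bsub>finite_subsets_group X\<^esub> C)"
    by (auto simp: mult_finite_subsets_group fin_part_def)
next
  fix A assume "A \<in> carrier (finite_subsets_group X)"
  then show "\<exists>B\<in>carrier (finite_subsets_group X). B \<otimes>\<^bsub>finite_subsets_group X\<^esub> A = \<one>\<^bsub>finite_subsets_group X\<^esub>"
    by (intro bexI[of _ A]) auto
qed auto

lemma group_finite_subsets_group: "group (finite_subsets_group X)"
  using comm_group_finite_subsets_group comm_group.axioms(2) by blast

lemma inv_finite_subsets_group: "inv\<^bsub>finite_subsets_group X\<^esub> A = fin_part X A"
proof (cases "A \<in> carrier (finite_subsets_group X)")
  case True
  then show ?thesis
    by (simp add: group.inv_equality[OF group_finite_subsets_group])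
next
  case False
  then have A: "fin_part X A = {}" by (auto simp: fin_part_def)
  have "(THE B. B \<in> carrier (finite_subsets_group X) \<and> A \<otimes>\<^bsub>finite_subsets_group X\<^esub> B = {}
          \<and> B \<otimes>\<^bsub>finite_subsets_group X\<^esub> A = {}) = {}"
    by (rule the_equality) (auto simp: mult_finite_subsets_group A)
  then show ?thesis by (simp add: m_inv_def A)
qed

lemma fin_part_finite_subset [simp]: "finite (fin_part X A)" "fin_part X A \<subseteq> X"
  by (simp_all add: fin_part_def)

lemma boolean_finite_subsets_group: "boolean_group (finite_subsets_group X)"
  unfolding boolean_group_def using comm_group_finite_subsets_group by simp

lemma norm_dist_finite_subsets_group:
  "norm_dist (finite_subsets_group X) nrm A B = nrm (sym_diff (fin_part X A) (fin_part X B))"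
  by (simp add: norm_dist_def inv_finite_subsets_group mult_finite_subsets_group)

locale pointed_ultrametric = Metric_space X d for X :: "'x set" and d +
  fixes x0 :: 'x
  assumes ultra: "\<lbrakk>x \<in> X; y \<in> X; z \<in> X\<rbrakk> \<Longrightarrow> d x z \<le> max (d x y) (d y z)"
    and base_point: "x0 \<in> X"
begin

text \<open>Admissible radii at a centre c are bounded by max 1 (d c x0); this keeps the norm finite.\<close>

definition radius_cap :: "'x \<Rightarrow> real" where
  "radius_cap c = max 1 (d c x0)"

definition odd_radii :: "'x set \<Rightarrow> real set" where
  "odd_radii A = {r. \<exists>c\<in>X. 0 < r \<and> r \<le> radius_cap c \<and> odd (card (A \<inter> mball c r))}"

definition parity_norm :: "'x set \<Rightarrow> real" where
  "parity_norm A = Sup (insert 0 (odd_radii A))"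

lemma radius_cap_ge_1: "1 \<le> radius_cap c"
  by (simp add: radius_cap_def)

text \<open>An odd radius for A is admissible at some point of A: moving the centre into the ball does not
  decrease the cap, by the ultrametric inequality.\<close>

lemma odd_radius_le_cap:
  assumes "r \<in> odd_radii A"
  shows "\<exists>a\<in>A. r \<le> radius_cap a"
proof -
  obtain c where c: "c \<in> X" "0 < r" "r \<le> radius_cap c" "odd (card (A \<inter> mball c r))"
    using assms by (auto simp: odd_radii_def)
  then have "A \<inter> mball c r \<noteq> {}" by (metis card.empty even_zero)
  then obtain a where a: "a \<in> A" "a \<in> X" "d c a < r" by auto
  have "r \<le> radius_cap a"
  proof (cases "r \<le> 1")
    case True
    then show ?thesis using radius_cap_ge_1[of a] by linarith
  next
    case False
    then have "r \<le> d c x0" using c(3) by (simp add: radius_cap_def)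
    moreover have "d c x0 \<le> max (d c a) (d a x0)" using ultra c(1) a(2) base_point by blast
    ultimately show ?thesis using a(3) by (auto simp: radius_cap_def max_def split: if_splits)
  qed
  with a show ?thesis by blast
qed

lemma bdd_above_odd_radii:
  assumes "finite A"
  shows "bdd_above (odd_radii A)"
proof -
  have cap_nonneg: "0 \<le> radius_cap a" for a
    using radius_cap_ge_1[of a] by linarith
  have "r \<le> sum radius_cap A" if r: "r \<in> odd_radii A" for r
  proof -
    obtain a where "a \<in> A" "r \<le> radius_cap a" using odd_radius_le_cap[OF r] by blast
    moreover have "radius_cap a \<le> sum radius_cap A"
      using assms \<open>a \<in> A\<close> cap_nonneg by (intro member_le_sum) auto
    ultimately show ?thesis by linarith
  qed
  then show ?thesis unfolding bdd_above_def by blast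
qed

lemma parity_norm_ge: "finite A \<Longrightarrow> r \<in> odd_radii A \<Longrightarrow> r \<le> parity_norm A"
  unfolding parity_norm_def by (intro cSup_upper) (simp_all add: bdd_above_odd_radii)

lemma parity_norm_nonneg: "finite A \<Longrightarrow> 0 \<le> parity_norm A"
  unfolding parity_norm_def by (intro cSup_upper) (simp_all add: bdd_above_odd_radii)

lemma parity_norm_le: "0 \<le> t \<Longrightarrow> (\<And>r. r \<in> odd_radii A \<Longrightarrow> r \<le> t) \<Longrightarrow> parity_norm A \<le> t"
  unfolding parity_norm_def by (intro cSup_least) auto

lemma parity_norm_empty [simp]: "parity_norm {} = 0"
  by (simp add: parity_norm_def odd_radii_def)

lemma parity_norm_sym_diff:
  assumes "finite A" "finite B"
  shows "parity_norm (sym_diff A B) \<le> max (parity_norm A) (parity_norm B)"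
proof (rule parity_norm_le)
  show "0 \<le> max (parity_norm A) (parity_norm B)"
    using parity_norm_nonneg[OF assms(1)] by linarith
  fix r assume "r \<in> odd_radii (sym_diff A B)"
  then obtain c where c: "c \<in> X" "0 < r" "r \<le> radius_cap c" "odd (card (sym_diff A B \<inter> mball c r))"
    by (auto simp: odd_radii_def)
  with odd_card_sym_diff_Int[OF assms c(4)] have "r \<in> odd_radii A \<or> r \<in> odd_radii B"
    unfolding odd_radii_def by blast
  then show "r \<le> max (parity_norm A) (parity_norm B)"
    using parity_norm_ge assms by fastforce
qed

lemma isolating_radius:
  assumes "finite A" "A \<subseteq> X" "a \<in> A"
  shows "\<exists>r>0. r \<le> radius_cap a \<and> A \<inter> mball a r = {a}"
proof -
  define R where "R = insert (radius_cap a) (d a ` (A - {a}))"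
  have "finite R" using assms(1) by (simp add: R_def)
  have "0 < t" if t: "t \<in> R" for t
  proof (cases "t = radius_cap a")
    case True
    then show ?thesis using radius_cap_ge_1[of a] by linarith
  next
    case False
    then obtain b where b: "b \<in> A" "b \<noteq> a" "t = d a b" using t by (auto simp: R_def)
    then have "d a b \<noteq> 0" using assms(2,3) zero[of a b] by blast
    then show ?thesis using b(3) nonneg[of a b] by linarith
  qed
  then have "0 < Min R" using \<open>finite R\<close> by (simp add: R_def)
  moreover have "Min R \<le> radius_cap a" using \<open>finite R\<close> by (simp add: R_def)
  moreover have "A \<inter> mball a (Min R) = {a}"
  proof (intro equalityI subsetI)
    fix b assume b: "b \<in> A \<inter> mball a (Min R)"
    show "b \<in> {a}"
    proof (rule ccontr)
      assume "b \<notin> {a}"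
      then have "Min R \<le> d a b" using \<open>finite R\<close> b by (simp add: R_def)
      then show False using b by simp
    qed
  qed (use assms \<open>0 < Min R\<close> in auto)
  ultimately show ?thesis by blast
qed

lemma parity_norm_pos:
  assumes "finite A" "A \<subseteq> X" "A \<noteq> {}"
  shows "0 < parity_norm A"
proof -
  obtain a where "a \<in> A" using assms(3) by blast
  then obtain r where r: "0 < r" "r \<le> radius_cap a" "A \<inter> mball a r = {a}"
    using isolating_radius assms(1,2) by blast
  then have "r \<in> odd_radii A" using \<open>a \<in> A\<close> assms(2) by (auto simp: odd_radii_def)
  with r(1) parity_norm_ge[OF assms(1)] show ?thesis by fastforce
qed

lemma odd_radius_pair_le:
  assumes "x \<in> X" "y \<in> X" "x \<noteq> y" "r \<in> odd_radii {x, y}"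
  shows "r \<le> d x y"
proof -
  obtain c where c: "c \<in> X" "odd (card ({x, y} \<inter> mball c r))"
    using assms(4) by (auto simp: odd_radii_def)
  then have "(x \<in> mball c r) \<noteq> (y \<in> mball c r)"
    using assms(3) by (cases "x \<in> mball c r"; cases "y \<in> mball c r") auto
  then consider "d c x < r" "r \<le> d c y" | "d c y < r" "r \<le> d c x"
    using c(1) assms(1,2) by fastforce
  then show ?thesis
  proof cases
    case 1
    moreover have "d c y \<le> max (d c x) (d x y)" using ultra c(1) assms(1,2) by blast
    ultimately show ?thesis by linarith
  next
    case 2
    moreover have "d c x \<le> max (d c y) (d y x)" using ultra c(1) assms(1,2) by blast
    ultimately show ?thesis using commute[of x y] by linarith
  qed
qed

lemma distance_odd_radius:
  assumes "x \<in> X" "y \<in> X" "x \<noteq> y" "d y x0 \<le> d x x0"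
  shows "d x y \<in> odd_radii {x, y}"
proof -
  have "d x y \<le> max (d x x0) (d x0 y)" using ultra assms(1,2) base_point by blast
  then have "d x y \<le> radius_cap x"
    using assms(4) commute[of x0 y] unfolding radius_cap_def by linarith
  moreover have "0 < d x y" using zero[OF assms(1,2)] assms(3) nonneg[of x y] by linarith
  moreover have "{x, y} \<inter> mball x (d x y) = {x}" using assms(1,2) \<open>0 < d x y\<close> by auto
  ultimately show ?thesis
    unfolding odd_radii_def using assms(1) by (intro CollectI bexI[of _ x]) simp_all
qed

lemma parity_norm_pair:
  assumes "x \<in> X" "y \<in> X"
  shows "parity_norm (sym_diff {x} {y}) = d x y"
proof (cases "x = y")
  case True
  then show ?thesis using assms by simp
next
  case False
  note xy = \<open>x \<noteq> y\<close>
  have "parity_norm {x, y} \<le> d x y"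
    using odd_radius_pair_le[OF assms xy] by (intro parity_norm_le) auto
  moreover have "d x y \<le> parity_norm {x, y}"
  proof (cases "d y x0 \<le> d x x0")
    case True
    then show ?thesis using parity_norm_ge[OF _ distance_odd_radius[OF assms xy]] by simp
  next
    case False
    then have "d y x \<in> odd_radii {x, y}"
      using distance_odd_radius[OF assms(2,1)] xy by (simp add: insert_commute)
    then show ?thesis using parity_norm_ge[of "{x, y}"] commute[of x y] by simp
  qed
  moreover have "sym_diff {x} {y} = {x, y}" using xy by auto
  ultimately show ?thesis by simp
qed

lemma parity_norm_move_points:
  assumes "finite A" "inj_on f A" "inj_on h A" "f ` A \<subseteq> X" "h ` A \<subseteq> X"
    and "\<And>a. a \<in> A \<Longrightarrow> d (f a) (h a) \<le> t" and "0 \<le> t"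
  shows "parity_norm (sym_diff (f ` A) (h ` A)) \<le> t"
  using assms
proof (induction A rule: finite_induct)
  case empty
  then show ?case by simp
next
  case (insert a A)
  have "f a \<notin> f ` A" "h a \<notin> h ` A" using insert(1,2,4,5) by auto
  then have split: "sym_diff (f ` insert a A) (h ` insert a A) =
      sym_diff (sym_diff {f a} {h a}) (sym_diff (f ` A) (h ` A))"
    unfolding image_insert by (rule sym_diff_insert)
  have "parity_norm (sym_diff {f a} {h a}) \<le> t"
    using parity_norm_pair insert.prems by simp
  moreover have "parity_norm (sym_diff (f ` A) (h ` A)) \<le> t"
    using insert.prems by (intro insert.IH) (auto intro: inj_on_subset)
  ultimately show ?case
    unfolding split using parity_norm_sym_diff[of "sym_diff {f a} {h a}" "sym_diff (f ` A) (h ` A)"]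
      insert(1) by simp
qed

text \<open>A finite odd set Q \<subseteq> C that is closed under \<delta>-closeness within C contains a point whose
  \<delta>-ball meets C oddly: the \<delta>-balls of an ultrametric partition Q.\<close>

lemma odd_cluster:
  assumes "finite Q" "Q \<subseteq> C" "C \<subseteq> X" "0 < \<delta>"
    and "\<And>y z. y \<in> Q \<Longrightarrow> z \<in> C \<Longrightarrow> d y z < \<delta> \<Longrightarrow> z \<in> Q"
    and "odd (card Q)"
  shows "\<exists>y\<in>Q. odd (card (C \<inter> mball y \<delta>))"
  using assms
proof (induction "card Q" arbitrary: Q rule: less_induct)
  case less
  have "Q \<noteq> {}" using less.prems(6) by (metis card.empty even_zero)
  then obtain y where y: "y \<in> Q" by blast
  have yX: "y \<in> X" using y less.prems(2,3) by blast
  define K where "K = C \<inter> mball y \<delta>"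
  show ?case
  proof (cases "odd (card K)")
    case True
    then show ?thesis using y K_def by blast
  next
    case False
    have KQ: "K \<subseteq> Q" unfolding K_def using less.prems(5)[OF y] by auto
    have "y \<in> K" unfolding K_def using y yX less.prems(2,4) by auto
    have "finite K" using KQ less.prems(1) finite_subset by blast
    then have card_rest: "card (Q - K) = card Q - card K" "card K \<le> card Q" "0 < card K"
      using card_Diff_subset[OF _ KQ] card_mono[OF less.prems(1) KQ] \<open>y \<in> K\<close> card_gt_0_iff
      by blast+
    have closed_rest: "z \<in> Q - K" if z: "y' \<in> Q - K" "z \<in> C" "d y' z < \<delta>" for y' z
    proof -
      have "y' \<in> X" "z \<in> X" using z less.prems(2,3) by blast+
      have "z \<notin> K"
      proof
        assume "z \<in> K"
        then have "d y z < \<delta>" unfolding K_def by simp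
        moreover have "d y y' \<le> max (d y z) (d z y')" using ultra yX \<open>y' \<in> X\<close> \<open>z \<in> X\<close> by blast
        ultimately have "y' \<in> K"
          unfolding K_def using z less.prems(2) yX \<open>y' \<in> X\<close> commute[of y' z] by auto
        then show False using z by blast
      qed
      then show ?thesis using z less.prems(5) by blast
    qed
    have "\<exists>y\<in>Q - K. odd (card (C \<inter> mball y \<delta>))"
    proof (rule less.hyps[OF _ _ _ less.prems(3,4) closed_rest])
      show "card (Q - K) < card Q" "odd (card (Q - K))"
        using card_rest False less.prems(6) by (auto simp: even_diff_nat)
    qed (use less.prems(1,2) in auto)
    then show ?thesis by blast
  qed
qed

lemma parity_norm_image_small:
  assumes inj: "inj_on f X" and fX: "f ` X \<subseteq> X"
    and unif: "\<And>x y. x \<in> X \<Longrightarrow> y \<in> X \<Longrightarrow> d x y < \<delta> \<Longrightarrow> d (f x) (f y) < \<epsilon>"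
    and \<delta>: "0 < \<delta>" "\<delta> \<le> 1" and "0 \<le> \<epsilon>"
    and C: "finite C" "C \<subseteq> X" and small: "parity_norm C < \<delta>"
  shows "parity_norm (f ` C) \<le> \<epsilon>"
proof (rule parity_norm_le[OF \<open>0 \<le> \<epsilon>\<close>], rule ccontr)
  fix r assume "r \<in> odd_radii (f ` C)" and "\<not> r \<le> \<epsilon>"
  then obtain c where c: "c \<in> X" "odd (card (f ` C \<inter> mball c r))" and "\<epsilon> < r"
    by (auto simp: odd_radii_def)
  define Q where "Q = {y \<in> C. f y \<in> mball c r}"
  have "Q \<subseteq> C" "finite Q" using C(1) by (auto simp: Q_def)
  have "f ` Q = f ` C \<inter> mball c r" by (auto simp: Q_def)
  moreover have "inj_on f Q" using inj_on_subset[OF inj] \<open>Q \<subseteq> C\<close> C(2) by blast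
  ultimately have "odd (card Q)" using c(2) card_image by metis
  have "z \<in> Q" if z: "y \<in> Q" "z \<in> C" "d y z < \<delta>" for y z
  proof -
    have "y \<in> X" "z \<in> X" using z \<open>Q \<subseteq> C\<close> C(2) by blast+
    then have "f y \<in> X" "f z \<in> X" "d (f y) (f z) < \<epsilon>" using fX unif z(3) by auto
    moreover have "d c (f y) < r" using z(1) by (simp add: Q_def)
    moreover have "d c (f z) \<le> max (d c (f y)) (d (f y) (f z))" using ultra c(1) calculation(1,2) by blast
    ultimately show ?thesis using \<open>\<epsilon> < r\<close> z(2) c(1) by (auto simp: Q_def)
  qed
  then obtain y where y: "y \<in> Q" "odd (card (C \<inter> mball y \<delta>))"
    using odd_cluster[OF \<open>finite Q\<close> \<open>Q \<subseteq> C\<close> C(2) \<delta>(1) _ \<open>odd (card Q)\<close>] by blast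
  then have "\<delta> \<in> odd_radii C"
    using \<delta> radius_cap_ge_1[of y] \<open>Q \<subseteq> C\<close> C(2) unfolding odd_radii_def by force
  then show False using parity_norm_ge[OF C(1)] small by fastforce
qed

lemma parity_norm_singleton_ge_1: "x \<in> X \<Longrightarrow> 1 \<le> parity_norm {x}"
proof -
  assume x: "x \<in> X"
  have "{x} \<inter> mball x (radius_cap x) = {x}" using x radius_cap_ge_1[of x] by auto
  then have "radius_cap x \<in> odd_radii {x}" using x radius_cap_ge_1[of x] by (auto simp: odd_radii_def)
  then show ?thesis using parity_norm_ge[of "{x}"] radius_cap_ge_1[of x] by fastforce
qed

lemma isolating_radius_le_dist:
  assumes "A \<inter> mball a r = {a}" "a' \<in> A" "a' \<noteq> a" "a' \<in> X"
  shows "r \<le> d a a'"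
proof (rule ccontr)
  assume "\<not> r \<le> d a a'"
  moreover have "a \<in> X" using assms(1) by (metis Int_iff in_mball singletonI)
  ultimately have "a' \<in> A \<inter> mball a r" using assms(2,4) by simp
  then show False using assms(1,3) by (metis singletonD)
qed

lemma isolating_radius_sym_diff_singleton:
  assumes "finite A" "0 < r" "r \<le> radius_cap b" "A \<inter> mball b r = {b}" "x \<notin> mball b r"
  shows "r \<le> parity_norm (sym_diff A {x})"
proof -
  have "b \<in> mball b r" using assms(4) by (metis Int_iff singletonI)
  then have "b \<in> X" "b \<noteq> x" using assms(5) by auto
  have "sym_diff A {x} \<inter> mball b r = A \<inter> mball b r" using assms(5) by blast
  then have "sym_diff A {x} \<inter> mball b r = {b}" using assms(4) by simp
  then have "r \<in> odd_radii (sym_diff A {x})"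
    unfolding odd_radii_def using assms(2,3) \<open>b \<in> X\<close> by (intro CollectI bexI[of _ b]) simp_all
  then show ?thesis using parity_norm_ge[of "sym_diff A {x}"] assms(1) by simp
qed

text \<open>A finite set which is not a singleton has positive distance from all singletons: isolate two
  of its points; by the ultrametric inequality no x lies in both isolating balls.\<close>

lemma separated_from_singletons:
  assumes "finite A" "A \<subseteq> X" "\<And>x. A \<noteq> {x}"
  shows "\<exists>r>0. \<forall>x\<in>X. r \<le> parity_norm (sym_diff A {x})"
proof (cases "A = {}")
  case True
  then show ?thesis using parity_norm_singleton_ge_1 by (intro exI[of _ 1]) simp
next
  case False
  then obtain a where "a \<in> A" by blast
  moreover obtain a' where "a' \<in> A" "a' \<noteq> a" using assms(3)[of a] \<open>a \<in> A\<close> by blast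
  ultimately have a: "a \<in> A" "a' \<in> A" "a \<noteq> a'" "a \<in> X" "a' \<in> X" using assms(2) by auto
  obtain r1 where r1: "0 < r1" "r1 \<le> radius_cap a" "A \<inter> mball a r1 = {a}"
    using isolating_radius[OF assms(1,2) a(1)] by blast
  obtain r2 where r2: "0 < r2" "r2 \<le> radius_cap a'" "A \<inter> mball a' r2 = {a'}"
    using isolating_radius[OF assms(1,2) a(2)] by blast
  have "r1 \<le> d a a'" "r2 \<le> d a' a"
    using isolating_radius_le_dist r1(3) r2(3) a by auto
  show ?thesis
  proof (intro exI[of _ "min r1 r2"] conjI ballI)
    show "0 < min r1 r2" using r1 r2 by simp
    fix x assume x: "x \<in> X"
    have "d a a' \<le> max (d a x) (d x a')" using ultra a(4,5) x by blast
    then have "\<not> (d a x < r1 \<and> d a' x < r2)"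
      using \<open>r1 \<le> d a a'\<close> \<open>r2 \<le> d a' a\<close> commute[of a a'] commute[of x a']
      by (cases "d a x \<le> d x a'") (simp_all add: max_def)
    then have "x \<notin> mball a r1 \<or> x \<notin> mball a' r2" by auto
    then show "min r1 r2 \<le> parity_norm (sym_diff A {x})"
      using isolating_radius_sym_diff_singleton[OF assms(1) r1] isolating_radius_sym_diff_singleton[OF assms(1) r2]
      by (meson min.coboundedI1 min.coboundedI2)
  qed
qed

lemma norm_dist_parity_norm:
  "A \<in> carrier (finite_subsets_group X) \<Longrightarrow> B \<in> carrier (finite_subsets_group X) \<Longrightarrow>
     norm_dist (finite_subsets_group X) parity_norm A B = parity_norm (sym_diff A B)"
  by (simp add: norm_dist_finite_subsets_group)

lemma parity_norm_eq_0_iff: "finite A \<Longrightarrow> A \<subseteq> X \<Longrightarrow> parity_norm A = 0 \<longleftrightarrow> A = {}"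
  using parity_norm_pos by fastforce

lemma ultranorm_parity_norm: "ultranorm (finite_subsets_group X) parity_norm"
  unfolding ultranorm_def
proof (intro conjI ballI)
  fix A assume "A \<in> carrier (finite_subsets_group X)"
  then have A: "finite A" "A \<subseteq> X" by simp_all
  show "0 \<le> parity_norm A" using A(1) by (rule parity_norm_nonneg)
  show "parity_norm A = 0 \<longleftrightarrow> A = \<one>\<^bsub>finite_subsets_group X\<^esub>"
    using parity_norm_eq_0_iff[OF A] by simp
  show "parity_norm (inv\<^bsub>finite_subsets_group X\<^esub> A) = parity_norm A"
    using A by (simp add: inv_finite_subsets_group fin_part_def)
next
  fix A B assume "A \<in> carrier (finite_subsets_group X)" "B \<in> carrier (finite_subsets_group X)"
  then show "parity_norm (A \<otimes>\<^bsub>finite_subsets_group X\<^esub> B) \<le> max (parity_norm A) (parity_norm B)"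
    using parity_norm_sym_diff by simp
qed

lemma metric_parity_norm:
  "Metric_space (carrier (finite_subsets_group X)) (norm_dist (finite_subsets_group X) parity_norm)"
proof
  fix A B
  show "0 \<le> norm_dist (finite_subsets_group X) parity_norm A B"
    by (simp add: norm_dist_finite_subsets_group parity_norm_nonneg)
  show "norm_dist (finite_subsets_group X) parity_norm A B = norm_dist (finite_subsets_group X) parity_norm B A"
    by (simp add: norm_dist_finite_subsets_group Un_commute)
next
  fix A B assume carr: "A \<in> carrier (finite_subsets_group X)" "B \<in> carrier (finite_subsets_group X)"
  then have "finite (sym_diff A B)" "sym_diff A B \<subseteq> X" by auto
  from parity_norm_eq_0_iff[OF this] norm_dist_parity_norm[OF carr]
  show "norm_dist (finite_subsets_group X) parity_norm A B = 0 \<longleftrightarrow> A = B"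
    by (metis Diff_cancel Un_absorb Un_empty sup_bot_left Diff_eq_empty_iff subset_antisym)
next
  fix A B C assume carr: "A \<in> carrier (finite_subsets_group X)" "B \<in> carrier (finite_subsets_group X)"
    "C \<in> carrier (finite_subsets_group X)"
  have "parity_norm (sym_diff A C) \<le> max (parity_norm (sym_diff A B)) (parity_norm (sym_diff B C))"
    using parity_norm_sym_diff carr sym_diff_trans[of A C B] by simp
  moreover have "0 \<le> parity_norm (sym_diff A B)" "0 \<le> parity_norm (sym_diff B C)"
    using parity_norm_nonneg carr by simp_all
  ultimately show "norm_dist (finite_subsets_group X) parity_norm A C \<le>
      norm_dist (finite_subsets_group X) parity_norm A B + norm_dist (finite_subsets_group X) parity_norm B C"
    using carr by (simp add: norm_dist_parity_norm)
qed

sublocale E: Metric_space "carrier (finite_subsets_group X)" "norm_dist (finite_subsets_group X) parity_norm"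
  by (rule metric_parity_norm)

lemma isometric_singletons:
  "x \<in> X \<Longrightarrow> y \<in> X \<Longrightarrow> norm_dist (finite_subsets_group X) parity_norm {x} {y} = d x y"
  by (simp add: norm_dist_parity_norm parity_norm_pair)

lemma singletons_closed: "closedin E.mtopology ((\<lambda>x. {x}) ` X)"
  unfolding E.closedin_metric
proof (intro conjI allI impI)
  show "(\<lambda>x. {x}) ` X \<subseteq> carrier (finite_subsets_group X)" by auto
  fix A assume A: "A \<in> carrier (finite_subsets_group X) - (\<lambda>x. {x}) ` X"
  then have "finite A" "A \<subseteq> X" by auto
  moreover have "A \<noteq> {x}" for x using A by auto
  ultimately obtain r where r: "0 < r" "\<forall>x\<in>X. r \<le> parity_norm (sym_diff A {x})"
    using separated_from_singletons by blast
  have "{x} \<notin> E.mball A r" if "x \<in> X" for x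
    using r(2) that A E.in_mball[of "{x}" A r] by (auto simp: norm_dist_parity_norm)
  then have "disjnt ((\<lambda>x. {x}) ` X) (E.mball A r)" by (auto simp: disjnt_def)
  with r(1) show "\<exists>r>0. disjnt ((\<lambda>x. {x}) ` X) (E.mball A r)" by blast
qed

end

lemma finite_common_neighbourhood:
  assumes "finite S" "g0 \<in> topspace T"
    and "\<And>a. a \<in> S \<Longrightarrow> \<exists>U. openin T U \<and> g0 \<in> U \<and> (\<forall>g\<in>U. P a g)"
  shows "\<exists>U. openin T U \<and> g0 \<in> U \<and> (\<forall>g\<in>U. \<forall>a\<in>S. P a g)"
  using assms
proof (induction S rule: finite_induct)
  case empty
  then show ?case by (intro exI[of _ "topspace T"]) simp
next
  case (insert a S)
  obtain U1 where "openin T U1" "g0 \<in> U1" "\<forall>g\<in>U1. \<forall>a\<in>S. P a g"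
    using insert.IH insert.prems by blast
  moreover obtain U2 where "openin T U2" "g0 \<in> U2" "\<forall>g\<in>U2. P a g"
    using insert.prems(2) by blast
  ultimately show ?case by (intro exI[of _ "U1 \<inter> U2"]) auto
qed

lemma action_inverse:
  assumes G: "group G" and act: "is_action G X \<pi>" and g: "g \<in> carrier G"
  shows "\<pi> g ` X \<subseteq> X" "\<And>x. x \<in> X \<Longrightarrow> \<pi> (inv\<^bsub>G\<^esub> g) (\<pi> g x) = x"
    "\<And>x. x \<in> X \<Longrightarrow> \<pi> g (\<pi> (inv\<^bsub>G\<^esub> g) x) = x" "inj_on (\<pi> g) X"
proof -
  have closed: "\<forall>g\<in>carrier G. \<forall>x\<in>X. \<pi> g x \<in> X" and unit: "\<forall>x\<in>X. \<pi> \<one>\<^bsub>G\<^esub> x = x"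
    and comp: "\<forall>g\<in>carrier G. \<forall>h\<in>carrier G. \<forall>x\<in>X. \<pi> (g \<otimes>\<^bsub>G\<^esub> h) x = \<pi> g (\<pi> h x)"
    using act unfolding is_action_def by blast+
  have ig: "inv\<^bsub>G\<^esub> g \<in> carrier G" using group.inv_closed[OF G g] .
  show "\<pi> g ` X \<subseteq> X" using closed g by blast
  show left: "\<pi> (inv\<^bsub>G\<^esub> g) (\<pi> g x) = x" if "x \<in> X" for x
    using comp[rule_format, OF ig g that] group.l_inv[OF G g] unit that by simp
  show "\<pi> g (\<pi> (inv\<^bsub>G\<^esub> g) x) = x" if "x \<in> X" for x
    using comp[rule_format, OF g ig that] group.r_inv[OF G g] unit that by simp
  show "inj_on (\<pi> g) X"
    by (rule inj_on_inverseI[of X "\<pi> (inv\<^bsub>G\<^esub> g)"]) (rule left)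
qed

lemma image_in_carrier:
  "is_action G X \<pi> \<Longrightarrow> g \<in> carrier G \<Longrightarrow> A \<in> carrier (finite_subsets_group X) \<Longrightarrow>
     \<pi> g ` A \<in> carrier (finite_subsets_group X)"
  unfolding is_action_def by auto

lemma image_action:
  assumes "is_action G X \<pi>"
  shows "is_action G (carrier (finite_subsets_group X)) (\<lambda>g A. \<pi> g ` A)"
  using assms unfolding is_action_def
proof (intro conjI ballI)
  fix A assume "A \<in> carrier (finite_subsets_group X)"
  then have "\<And>x. x \<in> A \<Longrightarrow> \<pi> \<one>\<^bsub>G\<^esub> x = x" using assms by (auto simp: is_action_def)
  then show "\<pi> \<one>\<^bsub>G\<^esub> ` A = A" by (simp cong: image_cong)
next
  fix g h A assume "g \<in> carrier G" "h \<in> carrier G" "A \<in> carrier (finite_subsets_group X)"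
  then show "\<pi> (g \<otimes>\<^bsub>G\<^esub> h) ` A = \<pi> g ` \<pi> h ` A"
    using assms by (auto simp: is_action_def image_image intro!: image_cong)
qed auto

lemma image_action_iso:
  assumes G: "group G" and act: "is_action G X \<pi>" and g: "g \<in> carrier G"
  shows "(\<lambda>A. \<pi> g ` A) \<in> iso (finite_subsets_group X) (finite_subsets_group X)"
proof -
  note \<pi>g = action_inverse[OF G act g]
  note \<pi>g' = action_inverse[OF G act group.inv_closed[OF G g]]
  have hom: "(\<lambda>A. \<pi> g ` A) \<in> hom (finite_subsets_group X) (finite_subsets_group X)"
  proof (rule homI)
    fix A B assume "A \<in> carrier (finite_subsets_group X)" "B \<in> carrier (finite_subsets_group X)"
    moreover from this have "\<pi> g ` A \<subseteq> X" "\<pi> g ` B \<subseteq> X" using \<pi>g(1) by auto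
    ultimately show "\<pi> g ` (A \<otimes>\<^bsub>finite_subsets_group X\<^esub> B) =
        \<pi> g ` A \<otimes>\<^bsub>finite_subsets_group X\<^esub> \<pi> g ` B"
      using image_sym_diff[OF \<pi>g(4), of A B] by (simp add: mult_finite_subsets_group fin_part_def)
  qed (use \<pi>g(1) in auto)
  have "bij_betw (\<lambda>A. \<pi> g ` A) (carrier (finite_subsets_group X)) (carrier (finite_subsets_group X))"
  proof (rule bij_betw_byWitness[where f' = "\<lambda>A. \<pi> (inv\<^bsub>G\<^esub> g) ` A"])
    show "\<forall>A\<in>carrier (finite_subsets_group X). \<pi> (inv\<^bsub>G\<^esub> g) ` \<pi> g ` A = A"
      using \<pi>g(2) by (auto simp: image_image subset_iff intro!: image_cong[where g = id, simplified])
    show "\<forall>A\<in>carrier (finite_subsets_group X). \<pi> g ` \<pi> (inv\<^bsub>G\<^esub> g) ` A = A"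
      using \<pi>g(3) by (auto simp: image_image subset_iff intro!: image_cong[where g = id, simplified])
  qed (use image_in_carrier[OF act] g group.inv_closed[OF G g] in blast)+
  with hom show ?thesis by (simp add: iso_def)
qed

context pointed_ultrametric
begin

lemma orbit_maps_close:
  assumes cont: "continuous_map (prod_topology T mtopology) mtopology (\<lambda>(g, x). \<pi> g x)"
    and "g0 \<in> topspace T" "finite A0" "A0 \<subseteq> X" "0 < \<epsilon>"
  shows "\<exists>W. openin T W \<and> g0 \<in> W \<and> (\<forall>g\<in>W. \<forall>a\<in>A0. d (\<pi> g0 a) (\<pi> g a) < \<epsilon>)"
proof (rule finite_common_neighbourhood[OF assms(3,2)])
  fix a assume "a \<in> A0"
  then have "continuous_map T (prod_topology T mtopology) (\<lambda>g. (id g, a))"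
    using assms(4) by (intro continuous_map_pairedI continuous_map_id) auto
  from continuous_map_compose[OF this cont]
  have "continuous_map T mtopology (\<lambda>g. \<pi> g a)" by (simp add: o_def)
  then obtain U where "openin T U" "g0 \<in> U" "\<forall>g\<in>U. \<pi> g a \<in> mball (\<pi> g0 a) \<epsilon>"
    using assms(2,5) unfolding continuous_map_to_metric by blast
  then show "\<exists>U. openin T U \<and> g0 \<in> U \<and> (\<forall>g\<in>U. d (\<pi> g0 a) (\<pi> g a) < \<epsilon>)" by auto
qed

text \<open>The key estimate for joint continuity of the action on E: writing
  \<pi> g0 ` A0 + \<pi> g ` A = (\<pi> g0 ` A0 + \<pi> g ` A0) + \<pi> g ` (A0 + A),
  the first summand is small by continuity of the orbit maps and the second by \<pi>-uniformity.\<close>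

lemma image_action_estimate:
  assumes G: "group G" and top: "topspace T = carrier G" and act: "is_action G X \<pi>"
    and cont: "continuous_map (prod_topology T mtopology) mtopology (\<lambda>(g, x). \<pi> g x)"
    and unif: "pi_uniform G T X d \<pi>"
    and g0: "g0 \<in> carrier G" and A0: "finite A0" "A0 \<subseteq> X" and "0 < \<epsilon>"
  shows "\<exists>W \<delta>. openin T W \<and> g0 \<in> W \<and> 0 < \<delta> \<and>
     (\<forall>g\<in>W. \<forall>A. finite A \<and> A \<subseteq> X \<and> parity_norm (sym_diff A0 A) < \<delta> \<longrightarrow>
        parity_norm (sym_diff (\<pi> g0 ` A0) (\<pi> g ` A)) < \<epsilon>)"
proof -
  have "0 < \<epsilon> / 2" using \<open>0 < \<epsilon>\<close> by simp
  then obtain \<delta>' W1 where W1: "0 < \<delta>'" "openin T W1" "g0 \<in> W1"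
    "\<And>g x y. g \<in> W1 \<Longrightarrow> x \<in> X \<Longrightarrow> y \<in> X \<Longrightarrow> d x y < \<delta>' \<Longrightarrow> d (\<pi> g x) (\<pi> g y) < \<epsilon> / 2"
    using unif g0 unfolding pi_uniform_def by meson
  obtain W2 where W2: "openin T W2" "g0 \<in> W2" "\<forall>g\<in>W2. \<forall>a\<in>A0. d (\<pi> g0 a) (\<pi> g a) < \<epsilon> / 2"
    using orbit_maps_close[OF cont _ A0 \<open>0 < \<epsilon> / 2\<close>] g0 top by blast
  define \<delta> where "\<delta> = min \<delta>' 1"
  show ?thesis
  proof (intro exI[of _ "W1 \<inter> W2"] exI[of _ \<delta>] conjI ballI allI impI)
    show "openin T (W1 \<inter> W2)" "g0 \<in> W1 \<inter> W2" "0 < \<delta>" using W1 W2 by (auto simp: \<delta>_def)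
    fix g A assume g: "g \<in> W1 \<inter> W2" and A: "finite A \<and> A \<subseteq> X \<and> parity_norm (sym_diff A0 A) < \<delta>"
    have "g \<in> carrier G" using g openin_subset[OF W1(2)] top by blast
    note \<pi>g = action_inverse[OF G act this] and \<pi>g0 = action_inverse[OF G act g0]
    have moved: "parity_norm (sym_diff (\<pi> g0 ` A0) (\<pi> g ` A0)) \<le> \<epsilon> / 2"
      using W2(3) g A0 inj_on_subset[OF \<pi>g0(4)] inj_on_subset[OF \<pi>g(4)] \<pi>g0(1) \<pi>g(1) \<open>0 < \<epsilon>\<close>
      by (intro parity_norm_move_points) (auto simp: image_subset_iff intro: less_imp_le)
    have mapped: "parity_norm (\<pi> g ` sym_diff A0 A) \<le> \<epsilon> / 2"
    proof (rule parity_norm_image_small[OF \<pi>g(4,1)])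
      show "\<And>x y. x \<in> X \<Longrightarrow> y \<in> X \<Longrightarrow> d x y < \<delta> \<Longrightarrow> d (\<pi> g x) (\<pi> g y) < \<epsilon> / 2"
        using W1(4) g by (simp add: \<delta>_def)
    qed (use A A0 W1(1) \<open>0 < \<epsilon> / 2\<close> in \<open>auto simp: \<delta>_def\<close>)
    have "\<pi> g ` sym_diff A0 A = sym_diff (\<pi> g ` A0) (\<pi> g ` A)"
      using image_sym_diff[OF \<pi>g(4)] A A0 by blast
    then have "parity_norm (sym_diff (\<pi> g0 ` A0) (\<pi> g ` A)) \<le>
        max (parity_norm (sym_diff (\<pi> g0 ` A0) (\<pi> g ` A0))) (parity_norm (\<pi> g ` sym_diff A0 A))"
      using parity_norm_sym_diff A A0 sym_diff_trans[of "\<pi> g0 ` A0" "\<pi> g ` A" "\<pi> g ` A0"] by simp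
    with moved mapped \<open>0 < \<epsilon>\<close> show "parity_norm (sym_diff (\<pi> g0 ` A0) (\<pi> g ` A)) < \<epsilon>" by linarith
  qed
qed

lemma image_action_continuous:
  assumes G: "group G" and top: "topspace T = carrier G" and act: "is_action G X \<pi>"
    and cont: "continuous_map (prod_topology T mtopology) mtopology (\<lambda>(g, x). \<pi> g x)"
    and unif: "pi_uniform G T X d \<pi>"
  shows "continuous_map (prod_topology T E.mtopology) E.mtopology (\<lambda>(g, A). \<pi> g ` A)"
  unfolding E.continuous_map_to_metric
proof (intro ballI allI impI)
  note closure = image_in_carrier[OF act]
  fix p and \<epsilon> :: real assume p: "p \<in> topspace (prod_topology T E.mtopology)" and "0 < \<epsilon>"
  then obtain g0 A0 where p_eq: "p = (g0, A0)" and g0: "g0 \<in> carrier G"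
    and A0: "A0 \<in> carrier (finite_subsets_group X)"
    using top by auto
  then obtain W \<delta> where W: "openin T W" "g0 \<in> W" "0 < \<delta>"
    and close: "\<And>g A. g \<in> W \<Longrightarrow> finite A \<Longrightarrow> A \<subseteq> X \<Longrightarrow> parity_norm (sym_diff A0 A) < \<delta> \<Longrightarrow>
        parity_norm (sym_diff (\<pi> g0 ` A0) (\<pi> g ` A)) < \<epsilon>"
    using image_action_estimate[OF G top act cont unif g0 _ _ \<open>0 < \<epsilon>\<close>, of A0] by auto
  show "\<exists>U. openin (prod_topology T E.mtopology) U \<and> p \<in> U \<and>
      (\<forall>q\<in>U. (\<lambda>(g, A). \<pi> g ` A) q \<in> E.mball ((\<lambda>(g, A). \<pi> g ` A) p) \<epsilon>)"
  proof (intro exI[of _ "W \<times> E.mball A0 \<delta>"] conjI ballI)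
    show "openin (prod_topology T E.mtopology) (W \<times> E.mball A0 \<delta>)"
      using W(1) by (simp add: openin_prod_Times_iff)
    show "p \<in> W \<times> E.mball A0 \<delta>" using p_eq W A0 by simp
    fix q assume "q \<in> W \<times> E.mball A0 \<delta>"
    then obtain g A where q_eq: "q = (g, A)" and "g \<in> W" "A \<in> carrier (finite_subsets_group X)"
      and "parity_norm (sym_diff A0 A) < \<delta>"
      using A0 by (auto simp: norm_dist_parity_norm)
    moreover have "g \<in> carrier G" using \<open>g \<in> W\<close> openin_subset[OF W(1)] top by blast
    ultimately show "(\<lambda>(g, A). \<pi> g ` A) q \<in> E.mball ((\<lambda>(g, A). \<pi> g ` A) p) \<epsilon>"
      using close closure g0 A0 p_eq by (auto simp: norm_dist_parity_norm)
  qed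
qed

end

theorem theorem6p5:
  fixes G :: "('g, 'b) monoid_scheme" and T :: "'g topology"
    and X :: "'x set" and d :: "'x \<Rightarrow> 'x \<Rightarrow> real"
    and \<pi> :: "'g \<Rightarrow> 'x \<Rightarrow> 'x" and x0 :: 'x
  assumes "ultrametric X d"
    and "topological_group G T"
    and "is_action G X \<pi>"
    and "continuous_map (prod_topology T (Metric_space.mtopology X d))
           (Metric_space.mtopology X d) (\<lambda>(g, x). \<pi> g x)"
    and "pi_uniform G T X d \<pi>"
    and "x0 \<in> X"
    and "Metric_space.mbounded X d {\<pi> g x0 | g. g \<in> carrier G}"
  shows "\<exists>(E :: 'x set monoid) nrm \<sigma> \<alpha>.
           boolean_group E \<and> ultranorm E nrm \<and>
           is_action G (carrier E) \<sigma> \<and>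
           (\<forall>g\<in>carrier G. \<sigma> g \<in> iso E E) \<and>
           continuous_map (prod_topology T (Metric_space.mtopology (carrier E) (norm_dist E nrm)))
             (Metric_space.mtopology (carrier E) (norm_dist E nrm)) (\<lambda>(g, u). \<sigma> g u) \<and>
           \<alpha> ` X \<subseteq> carrier E \<and>
           (\<forall>x\<in>X. \<forall>y\<in>X. norm_dist E nrm (\<alpha> x) (\<alpha> y) = d x y) \<and>
           (\<forall>g\<in>carrier G. \<forall>x\<in>X. \<alpha> (\<pi> g x) = \<sigma> g (\<alpha> x)) \<and>
           closedin (Metric_space.mtopology (carrier E) (norm_dist E nrm)) (\<alpha> ` X)"
proof -
  have "Metric_space X d" "\<forall>x\<in>X. \<forall>y\<in>X. \<forall>z\<in>X. d x z \<le> max (d x y) (d y z)"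
    using assms(1) unfolding ultrametric_def by blast+
  then interpret pointed_ultrametric X d x0
    using assms(6) by (intro pointed_ultrametric.intro pointed_ultrametric_axioms.intro) auto
  have G: "group G" and top: "topspace T = carrier G"
    using assms(2) unfolding topological_group_def by blast+
  show ?thesis
    using boolean_finite_subsets_group ultranorm_parity_norm image_action[OF assms(3)]
      image_action_iso[OF G assms(3)] image_action_continuous[OF G top assms(3-5)]
      isometric_singletons singletons_closed
    by (intro exI[of _ "finite_subsets_group X"] exI[of _ parity_norm]
        exI[of _ "\<lambda>g A. \<pi> g ` A"] exI[of _ "\<lambda>x. {x}"]) auto
qed

end
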